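(* Let $\Delta=\{x_0,\dots,x_d\}$ and $\Delta'=\{y_0,\dots,y_d\}$ be vertex sets of two regular simplices of edge length $1$ in $\mathbb{R}^d$. If $\mathrm{diam}(\Delta\cup\Delta')=1$, then $\Delta=\Delta'$.
   Context: A regular simplex of edge length $1$ in $\mathbb{R}^d$ is given by its vertex set: $d+1$ points at pairwise Euclidean distance exactly $1$. $\mathrm{diam}(A)=\sup_{x,y\in A}\|x-y\|_2$. *)

theory Defs
  imports "HOL-Analysis.Analysis"
begin

definition regular_unit_simplex :: "(nat \<Rightarrow> real^'n) \<Rightarrow> bool" where
  "regular_unit_simplex x \<longleftrightarrow>
     (\<forall>i\<le>CARD('n). \<forall>j\<le>CARD('n). i \<noteq> j \<longrightarrow> dist (x i) (x j) = 1)"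

end

theory Submission
  imports Defs
begin

(* Centred at its centroid c, a regular unit simplex with m = d + 1 vertices has
  Gram matrix <x i - c, x j - c> = [i = j]/2 - 1/(2m); since these vectors span R^d,
  they form a tight frame: sum_i <u, x i - c>^2 = |u|^2/2 for every u.
  Together with sum_i <u, x i - c> = 0 this shows that a point within distance 1 of
  all vertices of a simplex is no farther from its centroid than the circumradius.
  If diam (Delta \<union> Delta') = 1, applying this to a vertex of Delta lying on the far
  side of its centroid from the centroid of Delta' forces the two centroids to
  coincide. A vertex of Delta' then lies on the circumsphere of Delta within unit
  distance of all vertices of Delta, and its barycentric coordinates with respect to
  Delta are nonnegative with sum of squares 1, so it is a vertex of Delta. *)

definition centroid :: "'i set \<Rightarrow> ('i \<Rightarrow> 'a::real_vector) \<Rightarrow> 'a" where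
  "centroid I x = (1 / real (card I)) *\<^sub>R (\<Sum>i\<in>I. x i)"

definition equilateral_on :: "'i set \<Rightarrow> ('i \<Rightarrow> 'a::metric_space) \<Rightarrow> bool" where
  "equilateral_on I x \<longleftrightarrow> (\<forall>i\<in>I. \<forall>j\<in>I. i \<noteq> j \<longrightarrow> dist (x i) (x j) = 1)"

lemma power2_norm_add:
  fixes a b :: "'a::real_inner"
  shows "(norm (a + b))\<^sup>2 = (norm a)\<^sup>2 + (norm b)\<^sup>2 + 2 * inner a b"
  by (simp add: power2_norm_eq_inner inner_add_left inner_add_right inner_commute)

lemma power2_norm_diff:
  fixes a b :: "'a::real_inner"
  shows "(norm (a - b))\<^sup>2 = (norm a)\<^sup>2 + (norm b)\<^sup>2 - 2 * inner a b"
  by (simp add: power2_norm_eq_inner inner_diff_left inner_diff_right inner_commute)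

lemma sum_power2_le_power2_sum:
  fixes s :: "'i \<Rightarrow> real"
  assumes I: "finite I" and nonneg: "\<And>j. j \<in> I \<Longrightarrow> 0 \<le> s j"
  shows "(\<Sum>j\<in>I. (s j)\<^sup>2) \<le> (\<Sum>j\<in>I. s j)\<^sup>2"
proof -
  have "(\<Sum>j\<in>I. (s j)\<^sup>2) \<le> (\<Sum>j\<in>I. s j * (\<Sum>i\<in>I. s i))"
  proof (rule sum_mono)
    fix j assume "j \<in> I"
    then have "s j \<le> (\<Sum>i\<in>I. s i)"
      using I nonneg by (intro member_le_sum) auto
    then show "(s j)\<^sup>2 \<le> s j * (\<Sum>i\<in>I. s i)"
      using nonneg[OF \<open>j \<in> I\<close>] by (simp add: power2_eq_square mult_left_mono)
  qed
  then show ?thesis by (simp add: power2_eq_square sum_distrib_right)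
qed

lemma exists_eq_sum_if_sum_power2_eq_power2_sum:
  fixes s :: "'i \<Rightarrow> real"
  assumes I: "finite I" and nonneg: "\<And>j. j \<in> I \<Longrightarrow> 0 \<le> s j"
    and eq: "(\<Sum>j\<in>I. (s j)\<^sup>2) = (\<Sum>j\<in>I. s j)\<^sup>2" and pos: "0 < (\<Sum>j\<in>I. s j)"
  shows "\<exists>k\<in>I. s k = (\<Sum>j\<in>I. s j)"
proof -
  have "I \<noteq> {}" using pos by auto
  then have "Max (s ` I) \<in> s ` I" using I by (intro Max_in) auto
  then obtain k where k: "k \<in> I" "s k = Max (s ` I)" by force
  have "(\<Sum>j\<in>I. s j)\<^sup>2 \<le> (\<Sum>j\<in>I. s j * s k)"
    unfolding eq[symmetric]
  proof (rule sum_mono)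
    fix j assume "j \<in> I"
    then have "s j \<le> s k" using I k by simp
    then show "(s j)\<^sup>2 \<le> s j * s k"
      using nonneg[OF \<open>j \<in> I\<close>] by (simp add: power2_eq_square mult_left_mono)
  qed
  then have "(\<Sum>j\<in>I. s j) \<le> s k"
    using pos by (simp add: power2_eq_square sum_distrib_right[symmetric])
  moreover have "s k \<le> (\<Sum>j\<in>I. s j)"
    using I k nonneg by (intro member_le_sum) auto
  ultimately have "s k = (\<Sum>j\<in>I. s j)"
    by linarith
  with k(1) show ?thesis
    by blast
qed

lemma regular_unit_simplex_iff_equilateral_on:
  fixes x :: "nat \<Rightarrow> real^'n"
  shows "regular_unit_simplex x \<longleftrightarrow> equilateral_on {..CARD('n)} x"
  by (auto simp: regular_unit_simplex_def equilateral_on_def)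

lemma sum_diff_centroid:
  assumes "finite I" and "I \<noteq> {}"
  shows "(\<Sum>i\<in>I. x i - centroid I x) = 0"
  using assms by (simp add: centroid_def sum_subtractf sum_constant_scaleR)

lemma equilateral_on_norm_diff:
  fixes x :: "'i \<Rightarrow> 'a::real_normed_vector"
  assumes "equilateral_on I x" and "i \<in> I" and "j \<in> I" and "i \<noteq> j"
  shows "norm (x i - x j) = 1"
  using assms by (simp add: equilateral_on_def dist_norm)

lemma equilateral_on_norm_diff_centroid:
  fixes x :: "'i \<Rightarrow> 'a::real_inner"
  assumes I: "finite I" and x: "equilateral_on I x" and "i \<in> I"
  shows "(norm (x i - centroid I x))\<^sup>2 = (real (card I) - 1) / (2 * real (card I))"
proof -
  define m where "m = real (card I)"
  define w where "w k = x k - centroid I x" for k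
  define T where "T = (\<Sum>k\<in>I. (norm (w k))\<^sup>2)"
  have card_pos: "card I > 0" using I \<open>i \<in> I\<close> by (auto simp: card_gt_0_iff)
  have m: "m > 0" using card_pos by (simp add: m_def)
  have sum_w: "(\<Sum>k\<in>I. w k) = 0"
    using sum_diff_centroid[OF I, of x] \<open>i \<in> I\<close> by (auto simp: w_def)
  have norm_w: "m * (norm (w a))\<^sup>2 + T = m - 1" if "a \<in> I" for a
  proof -
    have "(\<Sum>k\<in>I. (norm (w a - w k))\<^sup>2) = (\<Sum>k\<in>I. if k = a then 0 else 1)"
      using equilateral_on_norm_diff[OF x that] by (intro sum.cong) (auto simp: w_def)
    also have "\<dots> = m - 1"
      using I that card_pos by (simp add: sum.If_cases m_def Diff_eq[symmetric] card_Diff_singleton of_nat_diff)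
    finally have "m - 1 = (\<Sum>k\<in>I. (norm (w a - w k))\<^sup>2)" ..
    also have "\<dots> = (\<Sum>k\<in>I. (norm (w a))\<^sup>2 + (norm (w k))\<^sup>2 - 2 * inner (w a) (w k))"
      by (simp add: power2_norm_diff)
    also have "\<dots> = m * (norm (w a))\<^sup>2 + T - 2 * inner (w a) (\<Sum>k\<in>I. w k)"
      by (simp add: sum.distrib sum_subtractf sum_distrib_left inner_sum_right m_def T_def)
    finally show ?thesis by (simp add: sum_w)
  qed
  have "m * T = (\<Sum>k\<in>I. m * (norm (w k))\<^sup>2)"
    by (simp add: T_def sum_distrib_left)
  also have "\<dots> = (\<Sum>k\<in>I. m - 1 - T)"
    using norm_w by (intro sum.cong) (auto simp: algebra_simps)
  also have "\<dots> = m * (m - 1 - T)"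
    by (simp add: m_def)
  finally have "T = (m - 1) / 2"
    using m by simp
  with norm_w[OF \<open>i \<in> I\<close>] m show ?thesis
    by (simp add: w_def m_def[symmetric] field_simps)
qed

lemma equilateral_on_inner_diff_centroid:
  fixes x :: "'i \<Rightarrow> 'a::real_inner"
  assumes I: "finite I" and x: "equilateral_on I x" and "i \<in> I" and "j \<in> I"
  shows "inner (x i - centroid I x) (x j - centroid I x) =
    (if i = j then 1/2 else 0) - 1 / (2 * real (card I))"
proof -
  have "card I > 0" using I \<open>i \<in> I\<close> by (auto simp: card_gt_0_iff)
  then have r2: "(real (card I) - 1) / (2 * real (card I)) = 1/2 - 1 / (2 * real (card I))"
    by (simp add: field_simps)
  show ?thesis
  proof (cases "i = j")
    case True
    then show ?thesis
      using equilateral_on_norm_diff_centroid[OF I x \<open>i \<in> I\<close>] r2 by (simp add: power2_norm_eq_inner)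
  next
    case False
    have "norm ((x i - centroid I x) - (x j - centroid I x)) = 1"
      using equilateral_on_norm_diff[OF x \<open>i \<in> I\<close> \<open>j \<in> I\<close> False] by simp
    then show ?thesis
      using equilateral_on_norm_diff_centroid[OF I x] \<open>i \<in> I\<close> \<open>j \<in> I\<close> False r2
      by (simp add: dot_norm_neg[of "x i - centroid I x"])
  qed
qed

lemma equilateral_on_inner_edges:
  fixes x :: "'i \<Rightarrow> 'a::real_inner"
  assumes x: "equilateral_on I x" and "k \<in> I" and "i \<in> I - {k}" and "j \<in> I - {k}"
  shows "inner (x i - x k) (x j - x k) = (if i = j then 1 else 1/2)"
proof -
  have "norm (x i - x k) = 1" "norm (x j - x k) = 1"
    using assms by (auto intro: equilateral_on_norm_diff)
  moreover have "norm ((x i - x k) - (x j - x k)) = (if i = j then 0 else 1)"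
    using assms by (auto intro: equilateral_on_norm_diff)
  ultimately show ?thesis
    by (simp add: dot_norm_neg[of "x i - x k"])
qed

lemma equilateral_on_inj_on_edges:
  fixes x :: "'i \<Rightarrow> 'a::real_normed_vector"
  assumes x: "equilateral_on I x"
  shows "inj_on (\<lambda>i. x i - x k) (I - {k})"
  using equilateral_on_norm_diff[OF x] by (intro inj_onI) force

lemma equilateral_on_independent_edges:
  fixes x :: "'i \<Rightarrow> 'a::real_inner"
  assumes I: "finite I" and x: "equilateral_on I x" and k: "k \<in> I"
  shows "independent ((\<lambda>i. x i - x k) ` (I - {k}))"
proof
  assume dep: "dependent ((\<lambda>i. x i - x k) ` (I - {k}))"
  define J where "J = I - {k}"
  define v where "v i = x i - x k" for i
  obtain u where u: "\<exists>s\<in>v ` J. u s \<noteq> 0" "(\<Sum>s\<in>v ` J. u s *\<^sub>R s) = 0"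
    using dep I by (auto simp: dependent_finite v_def J_def)
  define c where "c i = u (v i)" for i
  have comb: "(\<Sum>i\<in>J. c i *\<^sub>R v i) = 0"
    using u(2) equilateral_on_inj_on_edges[OF x] by (simp add: sum.reindex v_def J_def c_def)
  have c_eq: "c j = - (\<Sum>i\<in>J. c i)" if "j \<in> J" for j
  proof -
    have "0 = inner (\<Sum>i\<in>J. c i *\<^sub>R v i) (v j)" by (simp add: comb)
    also have "\<dots> = (\<Sum>i\<in>J. c i * (if i = j then 1 else 1/2))"
      unfolding inner_sum_left using equilateral_on_inner_edges[OF x k] that
      by (intro sum.cong) (auto simp: v_def J_def)
    also have "\<dots> = (\<Sum>i\<in>J. c i / 2 + (if i = j then c i / 2 else 0))"
      by (intro sum.cong) auto
    also have "\<dots> = (\<Sum>i\<in>J. c i / 2) + c j / 2"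
      using I that by (simp add: sum.distrib J_def)
    finally show ?thesis by (simp add: sum_divide_distrib[symmetric])
  qed
  have "(\<Sum>i\<in>J. c i) = (\<Sum>i\<in>J. - (\<Sum>l\<in>J. c l))"
    by (rule sum.cong[OF refl c_eq])
  also have "\<dots> = - real (card J) * (\<Sum>i\<in>J. c i)"
    by simp
  finally have "(1 + real (card J)) * (\<Sum>i\<in>J. c i) = 0"
    using distrib_right[of 1 "real (card J)" "\<Sum>i\<in>J. c i"] by linarith
  then have "(\<Sum>i\<in>J. c i) = 0"
    by (simp add: add_pos_nonneg)
  then have "c j = 0" if "j \<in> J" for j
    using c_eq[OF that] by simp
  with u(1) show False by (auto simp: c_def)
qed

lemma equilateral_on_span_edges:
  fixes x :: "'i \<Rightarrow> 'a::euclidean_space"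
  assumes I: "finite I" and x: "equilateral_on I x" and k: "k \<in> I"
    and card: "card I = Suc DIM('a)"
  shows "span ((\<lambda>i. x i - x k) ` (I - {k})) = UNIV"
proof -
  have "card ((\<lambda>i. x i - x k) ` (I - {k})) = dim (UNIV :: 'a set)"
    using card_image[OF equilateral_on_inj_on_edges[OF x]] I k card
    by (simp add: card_Diff_singleton dim_UNIV)
  then have "UNIV \<subseteq> span ((\<lambda>i. x i - x k) ` (I - {k}))"
    using card_eq_dim[OF subset_UNIV] equilateral_on_independent_edges[OF I x k] I
    by blast
  then show ?thesis by blast
qed

lemma equilateral_on_tight_frame:
  fixes x :: "'i \<Rightarrow> 'a::euclidean_space"
  assumes I: "finite I" and x: "equilateral_on I x" and card: "card I = Suc DIM('a)"
  shows "(\<Sum>i\<in>I. inner u (x i - centroid I x) *\<^sub>R (x i - centroid I x)) = (1/2) *\<^sub>R u"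
proof -
  define w where "w i = x i - centroid I x" for i
  define F where "F u = (\<Sum>i\<in>I. inner u (w i) *\<^sub>R w i)" for u
  have "I \<noteq> {}" using card by auto
  then obtain k where k: "k \<in> I" by blast
  have "linear F"
    unfolding F_def linear_iff by (simp add: inner_add_left scaleR_add_left sum.distrib scaleR_sum_right)
  moreover have "F (w l) = (1/2) *\<^sub>R w l" if "l \<in> I" for l
  proof -
    have "F (w l) = (\<Sum>i\<in>I. ((if i = l then 1/2 else 0) - 1 / (2 * real (card I))) *\<^sub>R w i)"
      unfolding F_def w_def using equilateral_on_inner_diff_centroid[OF I x that]
      by (intro sum.cong) (auto simp: inner_commute)
    also have "\<dots> = (1/2) *\<^sub>R w l - (1 / (2 * real (card I))) *\<^sub>R (\<Sum>i\<in>I. w i)"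
      using I that by (simp add: scaleR_diff_left sum_subtractf scaleR_sum_right if_distrib[of "\<lambda>a. a *\<^sub>R _"] cong: if_cong)
    finally show ?thesis
      using sum_diff_centroid[OF I, of x] k by (auto simp: w_def)
  qed
  moreover have "u \<in> span (w ` I)"
  proof -
    have "x i - x k \<in> span (w ` I)" if "i \<in> I" for i
    proof -
      have "x i - x k = w i - w k" by (simp add: w_def)
      then show ?thesis using that k by (simp add: span_diff span_base)
    qed
    then have "span ((\<lambda>i. x i - x k) ` (I - {k})) \<subseteq> span (w ` I)"
      by (intro span_minimal) auto
    then show ?thesis
      using equilateral_on_span_edges[OF I x k card] by auto
  qed
  ultimately have "F u = (1/2) *\<^sub>R u"
    using linear_eq_on_span[OF _ linear_scaleR, of F "w ` I"] by blast
  then show ?thesis by (simp add: F_def w_def)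
qed

lemma equilateral_on_sum_inner_power2:
  fixes x :: "'i \<Rightarrow> 'a::euclidean_space"
  assumes "finite I" and "equilateral_on I x" and "card I = Suc DIM('a)"
  shows "(\<Sum>i\<in>I. (inner u (x i - centroid I x))\<^sup>2) = (norm u)\<^sup>2 / 2"
proof -
  have "(\<Sum>i\<in>I. (inner u (x i - centroid I x))\<^sup>2) =
      inner u (\<Sum>i\<in>I. inner u (x i - centroid I x) *\<^sub>R (x i - centroid I x))"
    by (simp add: inner_sum_right power2_eq_square)
  then show ?thesis
    using equilateral_on_tight_frame[OF assms] by (simp add: power2_norm_eq_inner)
qed

lemma equilateral_on_dist_centroid_le:
  fixes y :: "'i \<Rightarrow> 'a::euclidean_space"
  assumes I: "finite I" and y: "equilateral_on I y" and card: "card I = Suc DIM('a)"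
    and near: "\<And>j. j \<in> I \<Longrightarrow> dist z (y j) \<le> 1"
  shows "(dist z (centroid I y))\<^sup>2 \<le> (real (card I) - 1) / (2 * real (card I))"
proof -
  define m where "m = real (card I)"
  define r2 where "r2 = (m - 1) / (2 * m)"
  define u where "u = centroid I y - z"
  define q where "q = (norm u)\<^sup>2"
  define t where "t j = inner u (y j - centroid I y)" for j
  define M where "M = (1 - r2 - q) / 2"
  have m: "m \<ge> 1" using card by (simp add: m_def)
  have I_ne: "I \<noteq> {}" using card by auto
  have t_le: "t j \<le> M" if "j \<in> I" for j
  proof -
    have "(norm (u + (y j - centroid I y)))\<^sup>2 \<le> 1"
      using near[OF that] by (simp add: u_def dist_norm norm_minus_commute power_le_one)
    then show ?thesis
      using equilateral_on_norm_diff_centroid[OF I y that]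
      by (simp add: power2_norm_add t_def M_def q_def r2_def m_def)
  qed
  have sum_t: "(\<Sum>j\<in>I. t j) = 0"
    using sum_diff_centroid[OF I I_ne, of y] by (simp add: t_def inner_sum_right[symmetric])
  have "q / 2 = (\<Sum>j\<in>I. (t j)\<^sup>2)"
    using equilateral_on_sum_inner_power2[OF I y card] by (simp add: t_def q_def)
  also have "\<dots> \<le> (m - 1) * m * M\<^sup>2"
  proof -
    define s where "s j = M - t j" for j
    have s_nonneg: "0 \<le> s j" if "j \<in> I" for j
      using t_le[OF that] by (simp add: s_def)
    have sum_s: "(\<Sum>j\<in>I. s j) = m * M"
      using sum_t by (simp add: s_def sum_subtractf m_def)
    have "(\<Sum>j\<in>I. (t j)\<^sup>2) = (\<Sum>j\<in>I. M\<^sup>2 + (s j)\<^sup>2 - 2 * M * s j)"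
      by (intro sum.cong) (simp_all add: s_def power2_eq_square algebra_simps)
    also have "\<dots> = m * M\<^sup>2 + (\<Sum>j\<in>I. (s j)\<^sup>2) - 2 * M * (\<Sum>j\<in>I. s j)"
      by (simp add: sum.distrib sum_subtractf sum_distrib_left m_def)
    also have "\<dots> \<le> m * M\<^sup>2 + (m * M)\<^sup>2 - 2 * M * (m * M)"
      using sum_power2_le_power2_sum[of I s, OF I s_nonneg] by (simp add: sum_s)
    also have "\<dots> = (m - 1) * m * M\<^sup>2"
      by (simp add: power2_eq_square algebra_simps)
    finally show ?thesis .
  qed
  finally have q_le: "q \<le> 2 * ((m - 1) * m * M\<^sup>2)" by simp
  have "0 \<le> m * M"
    using sum_t sum_mono[of I t "\<lambda>_. M", OF t_le] by (simp add: m_def)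
  then have M: "0 \<le> M" using m by (simp add: zero_le_mult_iff)
  have "q \<le> r2"
  proof (rule ccontr)
    assume "\<not> q \<le> r2"
    then have "M \<le> (1 - 2 * r2) / 2"
      by (simp add: M_def)
    also have "\<dots> = 1 / (2 * m)"
      using m by (simp add: r2_def field_simps)
    finally have "M \<le> 1 / (2 * m)" .
    then have "M\<^sup>2 \<le> (1 / (2 * m))\<^sup>2"
      using M by (intro power_mono) auto
    then have "(m - 1) * m * M\<^sup>2 \<le> (m - 1) * m * (1 / (2 * m))\<^sup>2"
      using m by (intro mult_left_mono) auto
    then have "q \<le> 2 * ((m - 1) * m * (1 / (2 * m))\<^sup>2)"
      using q_le by linarith
    also have "\<dots> = r2"
      using m by (simp add: r2_def power2_eq_square field_simps)
    finally show False using \<open>\<not> q \<le> r2\<close> by simp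
  qed
  then show ?thesis
    by (simp add: q_def r2_def m_def u_def dist_norm norm_minus_commute)
qed

lemma equilateral_on_centroid_eq:
  fixes x y :: "'i \<Rightarrow> 'a::euclidean_space"
  assumes I: "finite I" and x: "equilateral_on I x" and y: "equilateral_on I y"
    and card: "card I = Suc DIM('a)"
    and near: "\<And>i j. i \<in> I \<Longrightarrow> j \<in> I \<Longrightarrow> dist (x i) (y j) \<le> 1"
  shows "centroid I x = centroid I y"
proof -
  define h where "h = centroid I y - centroid I x"
  define r2 where "r2 = (real (card I) - 1) / (2 * real (card I))"
  have I_ne: "I \<noteq> {}" using card by auto
  have "\<not> (\<forall>k\<in>I. 0 < inner (x k - centroid I x) h)"
  proof
    assume "\<forall>k\<in>I. 0 < inner (x k - centroid I x) h"
    then have "0 < (\<Sum>k\<in>I. inner (x k - centroid I x) h)"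
      using I I_ne by (intro sum_pos) auto
    then show False
      using sum_diff_centroid[OF I I_ne, of x] by (simp add: inner_sum_left[symmetric])
  qed
  then obtain k where k: "k \<in> I" "inner (x k - centroid I x) h \<le> 0"
    by (auto simp: not_less)
  have "r2 + (norm h)\<^sup>2 \<le> (norm ((x k - centroid I x) - h))\<^sup>2"
    using k(2) equilateral_on_norm_diff_centroid[OF I x k(1)]
    by (simp add: power2_norm_diff r2_def)
  also have "\<dots> = (dist (x k) (centroid I y))\<^sup>2"
    by (simp add: h_def dist_norm)
  also have "\<dots> \<le> r2"
    unfolding r2_def using near[OF k(1)] by (rule equilateral_on_dist_centroid_le[OF I y card])
  finally show ?thesis by (simp add: h_def)
qed

lemma equilateral_on_vertex_if_dist_centroid:
  fixes x :: "'i \<Rightarrow> 'a::euclidean_space"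
  assumes I: "finite I" and x: "equilateral_on I x" and card: "card I = Suc DIM('a)"
    and on_sphere: "(dist p (centroid I x))\<^sup>2 = (real (card I) - 1) / (2 * real (card I))"
    and near: "\<And>k. k \<in> I \<Longrightarrow> dist p (x k) \<le> 1"
  shows "p \<in> x ` I"
proof -
  define m where "m = real (card I)"
  define v where "v = p - centroid I x"
  define t where "t k = inner v (x k - centroid I x)" for k
  \<comment> \<open>\<open>2 * s k\<close> is the \<open>k\<close>-th barycentric coordinate of \<open>p\<close>\<close>
  define s where "s k = t k + 1 / (2 * m)" for k
  have m: "m \<ge> 1" using card by (simp add: m_def)
  have I_ne: "I \<noteq> {}" using card by auto
  have norm_v: "(norm v)\<^sup>2 = 1/2 - 1 / (2 * m)"
    using on_sphere m by (simp add: v_def dist_norm m_def[symmetric] field_simps)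
  have norm_w: "(norm (x k - centroid I x))\<^sup>2 = 1/2 - 1 / (2 * m)" if "k \<in> I" for k
    using equilateral_on_norm_diff_centroid[OF I x that] m by (simp add: m_def[symmetric] field_simps)
  have dist_eq: "(dist p (x k))\<^sup>2 = 1 - 1 / m - 2 * t k" if "k \<in> I" for k
  proof -
    have "(dist p (x k))\<^sup>2 = (norm (v - (x k - centroid I x)))\<^sup>2"
      by (simp add: v_def dist_norm)
    then show ?thesis
      using norm_v norm_w[OF that] by (simp add: power2_norm_diff t_def)
  qed
  have s_nonneg: "0 \<le> s k" if "k \<in> I" for k
  proof -
    have "(dist p (x k))\<^sup>2 \<le> 1"
      using near[OF that] by (simp add: power_le_one)
    then show ?thesis
      using dist_eq[OF that] m by (simp add: s_def field_simps)
  qed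
  have sum_t: "(\<Sum>k\<in>I. t k) = 0"
    using sum_diff_centroid[OF I I_ne, of x] by (simp add: t_def inner_sum_right[symmetric])
  have sum_s: "(\<Sum>k\<in>I. s k) = 1/2"
    using m by (simp add: s_def sum.distrib sum_t m_def[symmetric])
  have "(\<Sum>k\<in>I. (s k)\<^sup>2) = (\<Sum>k\<in>I. (t k)\<^sup>2) + (1 / m) * (\<Sum>k\<in>I. t k) + m / (4 * m\<^sup>2)"
    by (simp add: s_def power2_eq_square algebra_simps sum.distrib sum_distrib_left sum_divide_distrib m_def)
  also have "\<dots> = (1/2 - 1 / (2 * m)) / 2 + m / (4 * m\<^sup>2)"
    using equilateral_on_sum_inner_power2[OF I x card, of v] norm_v sum_t
    by (simp add: t_def)
  also have "\<dots> = 1/4"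
    using m by (simp add: power2_eq_square field_simps)
  finally have "(\<Sum>k\<in>I. (s k)\<^sup>2) = (\<Sum>k\<in>I. s k)\<^sup>2"
    by (simp add: sum_s power2_eq_square)
  moreover have "0 < (\<Sum>k\<in>I. s k)"
    by (simp add: sum_s)
  ultimately obtain k where k: "k \<in> I" "s k = 1/2"
    using exists_eq_sum_if_sum_power2_eq_power2_sum[of I s, OF I s_nonneg] sum_s by auto
  then have "2 * t k = 1 - 1 / m"
    using m by (simp add: s_def field_simps)
  then have "(dist p (x k))\<^sup>2 = 0"
    using dist_eq[OF k(1)] by linarith
  then show ?thesis using k(1) by simp
qed

lemma equilateral_on_image_subset:
  fixes x y :: "'i \<Rightarrow> 'a::euclidean_space"
  assumes I: "finite I" and x: "equilateral_on I x" and y: "equilateral_on I y"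
    and card: "card I = Suc DIM('a)"
    and near: "\<And>i j. i \<in> I \<Longrightarrow> j \<in> I \<Longrightarrow> dist (x i) (y j) \<le> 1"
  shows "y ` I \<subseteq> x ` I"
proof
  fix p assume "p \<in> y ` I"
  then obtain j where j: "j \<in> I" "p = y j" by blast
  have "(dist p (centroid I x))\<^sup>2 = (real (card I) - 1) / (2 * real (card I))"
    using equilateral_on_norm_diff_centroid[OF I y j(1)] equilateral_on_centroid_eq[OF assms]
    by (simp add: j(2) dist_norm)
  moreover have "dist p (x k) \<le> 1" if "k \<in> I" for k
    using near[OF that j(1)] by (simp add: j(2) dist_commute)
  ultimately show "p \<in> x ` I"
    by (rule equilateral_on_vertex_if_dist_centroid[OF I x card])
qed

theorem mainTheorem6:
  fixes x y :: "nat \<Rightarrow> real^'n"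
  assumes "regular_unit_simplex x" and "regular_unit_simplex y"
    and "diameter (x ` {..CARD('n)} \<union> y ` {..CARD('n)}) = 1"
  shows "x ` {..CARD('n)} = y ` {..CARD('n)}"
proof -
  let ?I = "{..CARD('n)}"
  have card: "card ?I = Suc DIM(real^'n)"
    by simp
  have x: "equilateral_on ?I x" and y: "equilateral_on ?I y"
    using assms(1,2) by (simp_all add: regular_unit_simplex_iff_equilateral_on)
  have near: "dist (x i) (y j) \<le> 1" if "i \<in> ?I" and "j \<in> ?I" for i j
  proof -
    have "dist (x i) (y j) \<le> diameter (x ` ?I \<union> y ` ?I)"
      using that by (intro diameter_bounded_bound finite_imp_bounded) auto
    then show ?thesis
      using assms(3) by simp
  qed
  have "y ` ?I \<subseteq> x ` ?I"
    using equilateral_on_image_subset[OF _ x y card] near by simp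
  moreover have "x ` ?I \<subseteq> y ` ?I"
    using equilateral_on_image_subset[OF _ y x card] near by (simp add: dist_commute)
  ultimately show ?thesis
    by blast
qed

end
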